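(* Let $\Omega$ be a domain partitioned as $\Omega=\bigcup_{k=1}^K\Omega_k$, let $X$, $Y$, $Z$ be spaces as described in the context, with linear operators $A: X\to Y$ and $B:X\to Z$, data $f\in Y$, $g\in Z$, and a weight $\tau\ge 0$. Suppose the boundary value problem $Au=f$ in $\Omega$, $Bu=g$ on $\partial\Omega$ has a solution $u^*$ with an approximating sequence $\{u_n^*\}_{n\ge1}\subset X$ (in the sense of the context). For each $k=1,\dots,K$ let $G_k$ be a compact subset of $Y|_{\Omega_k}$ containing $\{(Au_n^*-f)|_{\Omega_k}\}_{n\ge 1}$, and set $$\tilde V_K=\{v\in X:\ (Av-f)|_{\Omega_k}\in G_k\ \text{for all } k=1,\dots,K\}.$$ Then for every $\epsilon>0$ there exist integers $N_{\epsilon,1},\dots,N_{\epsilon,K}$ such that, with $\mathbf N_{\epsilon,K}=(N_{\epsilon,1},\dots,N_{\epsilon,K})$, $$\mathcal J_\tau^{h,\mathbf N_{\epsilon,K}}(v)\ \ge\ \mathcal J_\tau(v)-\epsilon\qquad\text{for all } v\in\tilde V_K .$$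
   Context: Setting: $X$ is a space of functions on $\Omega$; $Y$ is a Hilbert space of functions on $\Omega$ and, for each subdomain $\Omega_k$, $Y|_{\Omega_k}$ denotes the Hilbert space with the same structure as $Y$ but over $\Omega_k$, such that $\|w\|_Y^2=\sum_{k=1}^K\|w|_{\Omega_k}\|_{Y|_{\Omega_k}}^2$ (e.g. $Y=L^2(\Omega)$, $Y|_{\Omega_k}=L^2(\Omega_k)$); $Z$ is a normed space of functions on $\partial\Omega$. For each $k$, $\{\Phi_{k,i}\}_{i\ge1}$ is a complete orthonormal basis of $Y|_{\Omega_k}$, and $(w,\Phi_{k,i})_Y$ denotes the inner product in $Y|_{\Omega_k}$ of $w|_{\Omega_k}$ with $\Phi_{k,i}$. The loss functionals are $$\mathcal J_\tau(v)=\|f-Av\|_Y^2+\tau\|Bv-g\|_Z^2,\qquad \mathcal J_\tau^{h,\mathbf N}(v)=\sum_{k=1}^K\sum_{i=1}^{N_k}(f-Av,\Phi_{k,i})_Y^2+\tau\|Bv-g\|_Z^2,$$ for $\mathbf N=(N_1,\dots,N_K)$. Solution concept: $u^*$ (in a space $V$) is a solution of $Au=f$, $Bu=g$ if there is a sequence $\{u_n^*\}\subset X$ with $\|u_n^*-u^*\|_V\to0$ and $\|Au_n^*-f\|_Y+\|Bu_n^*-g\|_Z\to 0$; such a sequence is called an approximating sequence of $u^*$. *)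

theory Defs
  imports "HOL-Analysis.Analysis"
begin

definition linear_on_set :: "'v::real_vector set \<Rightarrow> ('v \<Rightarrow> 'y::real_vector) \<Rightarrow> bool" where
  "linear_on_set X T \<longleftrightarrow> subspace X \<and>
     (\<forall>x\<in>X. \<forall>y\<in>X. T (x + y) = T x + T y) \<and> (\<forall>c. \<forall>x\<in>X. T (c *\<^sub>R x) = c *\<^sub>R T x)"

definition complete_orthonormal_basis :: "'w::{real_inner,complete_space} set \<Rightarrow> (nat \<Rightarrow> 'w) \<Rightarrow> bool" where
  "complete_orthonormal_basis S Phi \<longleftrightarrow>
     (\<forall>i\<ge>1. Phi i \<in> S) \<and>
     (\<forall>i\<ge>1. \<forall>j\<ge>1. inner (Phi i) (Phi j) = (if i = j then 1 else 0)) \<and>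
     closure (span (Phi ` {1..})) = S"

definition approximating_sequence ::
  "'v::real_normed_vector set \<Rightarrow> ('v \<Rightarrow> 'y::real_normed_vector) \<Rightarrow> ('v \<Rightarrow> 'z::real_normed_vector)
   \<Rightarrow> 'y \<Rightarrow> 'z \<Rightarrow> 'v \<Rightarrow> (nat \<Rightarrow> 'v) \<Rightarrow> bool" where
  "approximating_sequence X A B f g ustar u \<longleftrightarrow>
     (\<forall>n. u n \<in> X) \<and>
     (\<lambda>n. norm (u n - ustar)) \<longlonglongrightarrow> 0 \<and>
     (\<lambda>n. norm (A (u n) - f) + norm (B (u n) - g)) \<longlonglongrightarrow> 0"

definition loss_J ::
  "('v \<Rightarrow> 'y::real_normed_vector) \<Rightarrow> ('v \<Rightarrow> 'z::real_normed_vector) \<Rightarrow> 'y \<Rightarrow> 'z \<Rightarrow> real \<Rightarrow> 'v \<Rightarrow> real" where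
  "loss_J A B f g \<tau> v = (norm (f - A v))\<^sup>2 + \<tau> * (norm (B v - g))\<^sup>2"

text \<open>The discretised loss J_tau^{h,N}; r k is the restriction to Omega_k, Phi k i the basis.\<close>
definition loss_Jh ::
  "nat \<Rightarrow> (nat \<Rightarrow> 'y \<Rightarrow> 'w::real_inner) \<Rightarrow> (nat \<Rightarrow> nat \<Rightarrow> 'w) \<Rightarrow> (nat \<Rightarrow> nat)
   \<Rightarrow> ('v \<Rightarrow> 'y::real_normed_vector) \<Rightarrow> ('v \<Rightarrow> 'z::real_normed_vector) \<Rightarrow> 'y \<Rightarrow> 'z \<Rightarrow> real \<Rightarrow> 'v \<Rightarrow> real" where
  "loss_Jh K r Phi N A B f g \<tau> v =
     (\<Sum>k=1..K. \<Sum>i=1..N k. (inner (r k (f - A v)) (Phi k i))\<^sup>2) + \<tau> * (norm (B v - g))\<^sup>2"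

end

theory Submission
  imports Defs
begin

text \<open>Only the first terms of the two losses differ, by the sum over the subdomains of the Bessel
remainders \<open>\<parallel>w\<parallel>\<^sup>2 - \<Sum>\<^bsub>i\<le>N\<^esub> \<langle>w, \<Phi>\<^sub>i\<rangle>\<^sup>2\<close> of the restricted residuals \<open>w\<close>.  Such a remainder is at most
the squared distance of \<open>w\<close> to the span of the first \<open>N\<close> basis vectors.  These spans increase
and their union is dense, so by compactness a single \<open>N\<close> brings them within any prescribed
distance of every point of \<open>G k\<close>: the remainder tends to zero uniformly on \<open>G k\<close>.\<close>

lemma Bessel_remainder_le_dist_span:
  fixes Phi :: "'i \<Rightarrow> 'w::real_inner"
  assumes "finite I"
    and orthonormal: "\<And>i j. i \<in> I \<Longrightarrow> j \<in> I \<Longrightarrow> inner (Phi i) (Phi j) = (if i = j then 1 else 0)"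
    and y: "y \<in> span (Phi ` I)"
  shows "(norm w)\<^sup>2 - (\<Sum>i\<in>I. (inner w (Phi i))\<^sup>2) \<le> (norm (w - y))\<^sup>2"
proof -
  define p where "p = (\<Sum>i\<in>I. inner w (Phi i) *\<^sub>R Phi i)"
  have p_coeff: "inner p (Phi j) = inner w (Phi j)" if "j \<in> I" for j
  proof -
    have "inner p (Phi j) = (\<Sum>i\<in>I. inner w (Phi i) * (if i = j then 1 else 0))"
      unfolding p_def inner_sum_left inner_scaleR_left
      by (rule sum.cong) (use that orthonormal in auto)
    also have "\<dots> = inner w (Phi j)"
      using that \<open>finite I\<close> by (simp add: if_distrib cong: if_cong)
    finally show ?thesis .
  qed
  have residual_orthogonal: "inner (w - p) z = 0" if "z \<in> span (Phi ` I)" for z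
    using that
  proof (rule span_induct)
    show "subspace {z. inner (w - p) z = 0}"
      by (auto simp: subspace_def inner_add_right)
  qed (use p_coeff in \<open>auto simp: inner_diff_left\<close>)
  have p_span: "p \<in> span (Phi ` I)"
    unfolding p_def by (intro span_sum span_scale span_base) auto
  have "(norm (w - y))\<^sup>2 = (norm ((w - p) + (p - y)))\<^sup>2"
    by simp
  also have "\<dots> = (norm (w - p))\<^sup>2 + (norm (p - y))\<^sup>2"
    using residual_orthogonal[OF span_diff[OF p_span y]]
    by (intro norm_add_Pythagorean) (simp add: orthogonal_def)
  also have "(norm (w - p))\<^sup>2 = (norm w)\<^sup>2 - inner w p"
    using residual_orthogonal[OF p_span]
    by (simp add: power2_norm_eq_inner inner_diff_left inner_diff_right inner_commute)
  also have "inner w p = (\<Sum>i\<in>I. (inner w (Phi i))\<^sup>2)"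
    unfolding p_def inner_sum_right inner_scaleR_right by (simp add: power2_eq_square)
  finally show ?thesis
    by simp
qed

lemma span_image_atLeast_eq_UN:
  fixes Phi :: "nat \<Rightarrow> 'a::real_vector"
  shows "span (Phi ` {m..}) = (\<Union>M. span (Phi ` {m..M}))"
proof
  show "span (Phi ` {m..}) \<subseteq> (\<Union>M. span (Phi ` {m..M}))"
  proof
    fix y assume "y \<in> span (Phi ` {m..})"
    then obtain t c where y: "y = (\<Sum>a\<in>t. c a *\<^sub>R a)" and t: "finite t" "t \<subseteq> Phi ` {m..}"
      unfolding span_explicit by blast
    obtain C where C: "C \<subseteq> {m..}" "finite C" "t = Phi ` C"
      using finite_subset_image[OF t] by blast
    obtain M where "\<forall>i\<in>C. i \<le> M"
      using C(2) finite_nat_set_iff_bounded_le by blast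
    with C have "t \<subseteq> Phi ` {m..M}"
      by auto
    moreover have "y \<in> span t"
      unfolding y by (intro span_sum span_scale span_base)
    ultimately show "y \<in> (\<Union>M. span (Phi ` {m..M}))"
      using span_mono by blast
  qed
  show "(\<Union>M. span (Phi ` {m..M})) \<subseteq> span (Phi ` {m..})"
    by (intro UN_least span_mono image_mono) auto
qed

lemma compact_eventually_subset_incseq_open_cover:
  fixes U :: "nat \<Rightarrow> 'a::topological_space set"
  assumes "compact G" "\<And>N. open (U N)" "incseq U" "G \<subseteq> (\<Union>N. U N)"
  shows "\<forall>\<^sub>F N in sequentially. G \<subseteq> U N"
proof -
  obtain D where "finite D" "G \<subseteq> (\<Union>N\<in>D. U N)"
    using compactE_image[of G UNIV U] assms by auto
  moreover obtain M where "\<forall>N\<in>D. N \<le> M"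
    using \<open>finite D\<close> finite_nat_set_iff_bounded_le by blast
  ultimately have "G \<subseteq> U N" if "N \<ge> M" for N
    using that monoD[OF \<open>incseq U\<close>] by (meson UN_subset_iff order_trans subset_trans)
  then show ?thesis
    by (rule eventually_sequentiallyI)
qed

lemma compact_uniform_Parseval:
  fixes Phi :: "nat \<Rightarrow> 'w::{real_inner,complete_space}"
  assumes basis: "complete_orthonormal_basis S Phi"
    and "compact G" "G \<subseteq> S" "e > 0"
  shows "\<forall>\<^sub>F N in sequentially. \<forall>w\<in>G. (norm w)\<^sup>2 - (\<Sum>i=1..N. (inner w (Phi i))\<^sup>2) \<le> e"
proof -
  have orthonormal: "\<forall>i\<ge>1. \<forall>j\<ge>1. inner (Phi i) (Phi j) = (if i = j then 1 else 0)"
    and dense: "closure (span (Phi ` {1..})) = S"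
    using basis by (auto simp: complete_orthonormal_basis_def)
  define U where "U N = (\<Union>y\<in>span (Phi ` {1..N}). ball y (sqrt e))" for N
  have "span (Phi ` {1..M}) \<subseteq> span (Phi ` {1..N})" if "M \<le> N" for M N
    using that by (intro span_mono image_mono) auto
  then have "incseq U"
    unfolding U_def incseq_def by blast
  moreover have "G \<subseteq> (\<Union>N. U N)"
  proof
    fix w assume "w \<in> G"
    then have "w \<in> closure (span (Phi ` {1..}))"
      using \<open>G \<subseteq> S\<close> dense by blast
    then obtain y where "y \<in> span (Phi ` {1..})" "dist y w < sqrt e"
      using \<open>e > 0\<close> closure_approachable real_sqrt_gt_zero by blast
    then show "w \<in> (\<Union>N. U N)"
      unfolding U_def span_image_atLeast_eq_UN by auto
  qed
  moreover have "open (U N)" for N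
    unfolding U_def by blast
  ultimately have "\<forall>\<^sub>F N in sequentially. G \<subseteq> U N"
    using compact_eventually_subset_incseq_open_cover \<open>compact G\<close> by blast
  then show ?thesis
  proof (rule eventually_mono, intro ballI)
    fix N w assume "G \<subseteq> U N" "w \<in> G"
    then obtain y where y: "y \<in> span (Phi ` {1..N})" "dist y w < sqrt e"
      unfolding U_def by auto
    have "(norm w)\<^sup>2 - (\<Sum>i=1..N. (inner w (Phi i))\<^sup>2) \<le> (norm (w - y))\<^sup>2"
      using orthonormal by (intro Bessel_remainder_le_dist_span y(1)) auto
    also have "\<dots> \<le> (sqrt e)\<^sup>2"
      using y(2) by (intro power_mono) (auto simp: dist_norm norm_minus_commute)
    finally show "(norm w)\<^sup>2 - (\<Sum>i=1..N. (inner w (Phi i))\<^sup>2) \<le> e"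
      using \<open>e > 0\<close> by simp
  qed
qed

lemma loss_J_le_loss_Jh_add:
  assumes "\<And>w. (norm w)\<^sup>2 = (\<Sum>k=1..K. (norm (r k w))\<^sup>2)"
    and "\<And>k. k \<in> {1..K} \<Longrightarrow>
      (norm (r k (f - A v)))\<^sup>2 - (\<Sum>i=1..N k. (inner (r k (f - A v)) (Phi k i))\<^sup>2) \<le> e"
  shows "loss_J A B f g \<tau> v \<le> loss_Jh K r Phi N A B f g \<tau> v + real K * e"
proof -
  have "(norm (f - A v))\<^sup>2 = (\<Sum>k=1..K. (norm (r k (f - A v)))\<^sup>2)"
    by (rule assms(1))
  also have "\<dots> \<le> (\<Sum>k=1..K. (\<Sum>i=1..N k. (inner (r k (f - A v)) (Phi k i))\<^sup>2) + e)"
    using assms(2) by (intro sum_mono) (simp add: algebra_simps)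
  also have "\<dots> = (\<Sum>k=1..K. \<Sum>i=1..N k. (inner (r k (f - A v)) (Phi k i))\<^sup>2) + real K * e"
    by (simp add: sum.distrib)
  finally show ?thesis
    unfolding loss_Jh_def loss_J_def by simp
qed

theorem mainTheorem1:
  fixes X :: "'v::real_normed_vector set"
    and A :: "'v \<Rightarrow> 'y::real_normed_vector"
    and B :: "'v \<Rightarrow> 'z::real_normed_vector"
    and K :: nat
    and S :: "nat \<Rightarrow> 'w::{real_inner,complete_space} set"
    and r :: "nat \<Rightarrow> 'y \<Rightarrow> 'w"
    and Phi :: "nat \<Rightarrow> nat \<Rightarrow> 'w"
    and f :: 'y and g :: 'z and \<tau> :: real
    and ustar :: 'v and u :: "nat \<Rightarrow> 'v"
    and G :: "nat \<Rightarrow> 'w set"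
  assumes "linear_on_set X A" and "linear_on_set X B"
    and "\<And>k. k \<in> {1..K} \<Longrightarrow> linear (r k)"
    and "\<And>k w. k \<in> {1..K} \<Longrightarrow> r k w \<in> S k"
    and "\<And>w. (norm w)\<^sup>2 = (\<Sum>k=1..K. (norm (r k w))\<^sup>2)"
    and "\<And>k. k \<in> {1..K} \<Longrightarrow> complete_orthonormal_basis (S k) (Phi k)"
    and "\<tau> \<ge> 0"
    and "approximating_sequence X A B f g ustar u"
    and "\<And>k. k \<in> {1..K} \<Longrightarrow> compact (G k) \<and> G k \<subseteq> S k"
    and "\<And>k n. k \<in> {1..K} \<Longrightarrow> r k (A (u n) - f) \<in> G k"
  shows "\<forall>\<epsilon>>0. \<exists>N :: nat \<Rightarrow> nat. \<forall>v \<in> {v \<in> X. \<forall>k\<in>{1..K}. r k (A v - f) \<in> G k}.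
           loss_Jh K r Phi N A B f g \<tau> v \<ge> loss_J A B f g \<tau> v - \<epsilon>"
proof (intro allI impI)
  fix \<epsilon> :: real assume "\<epsilon> > 0"
  define e where "e = \<epsilon> / (real K + 1)"
  have "e > 0" "real K * e \<le> \<epsilon>"
    using \<open>\<epsilon> > 0\<close> by (simp_all add: e_def field_simps)
  have "\<forall>\<^sub>F N in sequentially. \<forall>k\<in>{1..K}. \<forall>w\<in>G k. (norm w)\<^sup>2 - (\<Sum>i=1..N. (inner w (Phi k i))\<^sup>2) \<le> e"
    using assms(6,9) \<open>e > 0\<close> by (intro eventually_ball_finite ballI compact_uniform_Parseval) auto
  then obtain N where N: "\<forall>k\<in>{1..K}. \<forall>w\<in>G k. (norm w)\<^sup>2 - (\<Sum>i=1..N. (inner w (Phi k i))\<^sup>2) \<le> e"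
    unfolding eventually_sequentially by blast
  show "\<exists>N :: nat \<Rightarrow> nat. \<forall>v \<in> {v \<in> X. \<forall>k\<in>{1..K}. r k (A v - f) \<in> G k}.
           loss_Jh K r Phi N A B f g \<tau> v \<ge> loss_J A B f g \<tau> v - \<epsilon>"
  proof (intro exI[of _ "\<lambda>_. N"] ballI)
    fix v assume v: "v \<in> {v \<in> X. \<forall>k\<in>{1..K}. r k (A v - f) \<in> G k}"
    have "(norm (r k (f - A v)))\<^sup>2 - (\<Sum>i=1..N. (inner (r k (f - A v)) (Phi k i))\<^sup>2) \<le> e"
      if k: "k \<in> {1..K}" for k
    proof -
      have "r k (A v - f) \<in> G k"
        using v k by simp
      moreover have "r k (f - A v) = - r k (A v - f)"
        using linear_neg[OF assms(3)[OF k]] by (metis minus_diff_eq)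
      ultimately show ?thesis
        using N k by fastforce
    qed
    then have "loss_J A B f g \<tau> v \<le> loss_Jh K r Phi (\<lambda>_. N) A B f g \<tau> v + real K * e"
      by (rule loss_J_le_loss_Jh_add[OF assms(5)])
    with \<open>real K * e \<le> \<epsilon>\<close> show "loss_Jh K r Phi (\<lambda>_. N) A B f g \<tau> v \<ge> loss_J A B f g \<tau> v - \<epsilon>"
      by linarith
  qed
qed

end
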